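(* For all integers $m\ge 0$ and $n>1$, \[N_{\le m}(n)-M_{\le m}(n)=2\bigl(p(-m,n)-q(m,n)\bigr).\]
   Context: For a partition $\lambda$ with parts $\lambda_1\ge\cdots\ge\lambda_\ell>0$, its rank is $\lambda_1-\ell$. Its crank is $\lambda_1$ if $\lambda$ has no part equal to $1$, and otherwise is (the number of parts larger than the number of ones) minus (the number of ones). $N(m,n)$ (resp. $M(m,n)$) is the number of partitions of $n$ with rank (resp. crank) $m$; $N_{\le m}(n)=\sum_{|r|\le m}N(r,n)$, $M_{\le m}(n)=\sum_{|r|\le m}M(r,n)$. The rank-set of $\lambda$ is the infinite sequence $[-\lambda_1,\,1-\lambda_2,\,\dots,\,\ell-1-\lambda_\ell,\,\ell,\,\ell+1,\,\ell+2,\dots]$; "$m$ appears in the rank-set" means $m$ equals one of its entries. $q(m,n)$ is the number of partitions of $n$ whose rank-set contains $m$, and $p(-m,n)$ is the number of partitions of $n$ with rank $\ge -m$. *)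

theory Defs
  imports Main
begin

definition partitions :: "nat \<Rightarrow> nat list set" where
  "partitions n = {xs. sorted_wrt (\<ge>) xs \<and> (\<forall>x\<in>set xs. 0 < x) \<and> sum_list xs = n}"

definition rank :: "nat list \<Rightarrow> int" where
  "rank xs = (if xs = [] then 0 else int (hd xs) - int (length xs))"

definition crank :: "nat list \<Rightarrow> int" where
  "crank xs = (let w = count_list xs 1 in
     if w = 0 then (if xs = [] then 0 else int (hd xs))
     else int (length (filter (\<lambda>x. x > w) xs)) - int w)"

text \<open>m appears in the rank-set
  [-lambda_1, 1-lambda_2, ..., l-1-lambda_l, l, l+1, l+2, ...]
  (entry k-1-lambda_k for k = 1..l, written with 0-based index i = k-1).\<close>
definition in_rank_set :: "int \<Rightarrow> nat list \<Rightarrow> bool" where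
  "in_rank_set m xs \<longleftrightarrow>
     (\<exists>i<length xs. m = int i - int (xs ! i)) \<or> m \<ge> int (length xs)"

definition N :: "int \<Rightarrow> nat \<Rightarrow> nat" where
  "N m n = card {xs \<in> partitions n. rank xs = m}"

definition M :: "int \<Rightarrow> nat \<Rightarrow> nat" where
  "M m n = card {xs \<in> partitions n. crank xs = m}"

definition N_le :: "int \<Rightarrow> nat \<Rightarrow> nat" where
  "N_le m n = (\<Sum>r\<in>{-m..m}. N r n)"

definition M_le :: "int \<Rightarrow> nat \<Rightarrow> nat" where
  "M_le m n = (\<Sum>r\<in>{-m..m}. M r n)"

definition q :: "int \<Rightarrow> nat \<Rightarrow> nat" where
  "q m n = card {xs \<in> partitions n. in_rank_set m xs}"

text \<open>p(-m,n) as written in the paper: partitions of n with rank \<ge> -m.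
  Here the first argument is the bound itself, so p(-m,n) is p_rank_ge (-m) n.\<close>
definition p_rank_ge :: "int \<Rightarrow> nat \<Rightarrow> nat" where
  "p_rank_ge k n = card {xs \<in> partitions n. rank xs \<ge> k}"

end

theory Submission
  imports Defs "HOL-Library.Multiset"
begin

text \<open>Conjugation negates the rank, so the
  partitions with rank above \<open>m\<close> and below \<open>-m\<close> are equinumerous and
  \<open>N\<^sub>\<le>\<^sub>m(n) = 2p(-m,n) - p(n)\<close>. For the crank, a bijection of Dyson shows that, for every
  integer \<open>m\<close>, exactly \<open>q(m,n)\<close> partitions of \<open>n\<close> have crank at most \<open>m\<close>; and for
  \<open>m \<ge> 0\<close> the rank-set of the conjugate contains \<open>-m-1\<close> iff the rank-set of the partition
  misses \<open>m\<close>, so \<open>q(-m-1,n) = p(n) - q(m,n)\<close> and \<open>M\<^sub>\<le>\<^sub>m(n) = q(m,n) - q(-m-1,n) =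
  2q(m,n) - p(n)\<close>.\<close>

definition mpartitions :: "nat \<Rightarrow> nat multiset set" where
  "mpartitions n = {K. (\<forall>x\<in>#K. 0 < x) \<and> sum_mset K = n}"

definition parts_gt :: "nat \<Rightarrow> nat multiset \<Rightarrow> nat" where
  "parts_gt s K = size (filter_mset (\<lambda>x. s < x) K)"

definition parts_ge :: "nat \<Rightarrow> nat multiset \<Rightarrow> nat" where
  "parts_ge s K = size (filter_mset (\<lambda>x. s \<le> x) K)"

definition max_part :: "nat multiset \<Rightarrow> nat" where
  "max_part K = (if K = {#} then 0 else Max (set_mset K))"

definition mrank :: "nat multiset \<Rightarrow> int" where
  "mrank K = int (max_part K) - int (size K)"

definition mcrank :: "nat multiset \<Rightarrow> int" where
  "mcrank K = (let w = count K 1 in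
     if w = 0 then int (max_part K) else int (parts_gt w K) - int w)"

text \<open>If the parts are listed decreasingly as \<open>xs\<close>, the rank-set entry \<open>i - xs ! i\<close> equals
  \<open>m\<close> with \<open>xs ! i = s\<close> iff \<open>i = s + m\<close> and \<open>parts_gt s K \<le> i < parts_ge s K\<close>;
  the witness \<open>s = 0\<close> accounts for the tail \<open>\<ell>, \<ell> + 1, \<dots>\<close> of the rank-set.\<close>
definition in_mrank_set :: "int \<Rightarrow> nat multiset \<Rightarrow> bool" where
  "in_mrank_set m K \<longleftrightarrow>
     (\<exists>s. int (parts_gt s K) \<le> int s + m \<and> (s = 0 \<or> int s + m < int (parts_ge s K)))"

lemma parts_gt_empty [simp]: "parts_gt s {#} = 0"
  unfolding parts_gt_def by simp

lemma parts_ge_empty [simp]: "parts_ge s {#} = 0"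
  unfolding parts_ge_def by simp

lemma parts_gt_add_mset [simp]:
  "parts_gt s (add_mset x K) = parts_gt s K + (if s < x then 1 else 0)"
  unfolding parts_gt_def by simp

lemma parts_ge_add_mset [simp]:
  "parts_ge s (add_mset x K) = parts_ge s K + (if s \<le> x then 1 else 0)"
  unfolding parts_ge_def by simp

lemma parts_gt_union [simp]: "parts_gt s (K + L) = parts_gt s K + parts_gt s L"
  unfolding parts_gt_def by simp

lemma parts_ge_union [simp]: "parts_ge s (K + L) = parts_ge s K + parts_ge s L"
  unfolding parts_ge_def by simp

lemma parts_gt_replicate [simp]: "x \<le> s \<Longrightarrow> parts_gt s (replicate_mset k x) = 0"
  by (induction k) auto

lemma parts_ge_replicate [simp]: "x < s \<Longrightarrow> parts_ge s (replicate_mset k x) = 0"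
  by (induction k) auto

lemma parts_gt_remove:
  "x \<in># K \<Longrightarrow> parts_gt s K = parts_gt s (K - {#x#}) + (if s < x then 1 else 0)"
  by (metis parts_gt_add_mset insert_DiffM)

lemma parts_ge_remove:
  "x \<in># K \<Longrightarrow> parts_ge s K = parts_ge s (K - {#x#}) + (if s \<le> x then 1 else 0)"
  by (metis parts_ge_add_mset insert_DiffM)

lemma parts_ge_Suc: "parts_ge (Suc s) K = parts_gt s K"
  by (induction K) auto

lemma parts_ge_eq_parts_gt_plus_count: "parts_ge s K = parts_gt s K + count K s"
  by (induction K) auto

lemma parts_ge_pos_iff: "0 < parts_ge s K \<longleftrightarrow> (\<exists>x\<in>#K. s \<le> x)"
  by (induction K) auto

lemma parts_gt_0: "\<forall>x\<in>#K. 0 < x \<Longrightarrow> parts_gt 0 K = size K"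
  by (induction K) auto

lemma parts_ge_1: "\<forall>x\<in>#K. 0 < x \<Longrightarrow> parts_ge 1 K = size K"
  using parts_gt_0[of K] parts_ge_Suc[of 0 K] by simp

lemma parts_gt_1_plus_count_1: "\<forall>x\<in>#K. 0 < x \<Longrightarrow> parts_gt 1 K + count K 1 = size K"
  using parts_ge_eq_parts_gt_plus_count[of 1 K] parts_ge_1[of K] by simp

lemma size_filter_mset_mono:
  "(\<And>x. P x \<Longrightarrow> Q x) \<Longrightarrow> size (filter_mset P K) \<le> size (filter_mset Q K)"
  by (intro size_mset_mono filter_mset_mono_strong) auto

lemma parts_ge_antimono: "s \<le> s' \<Longrightarrow> parts_ge s' K \<le> parts_ge s K"
  unfolding parts_ge_def by (rule size_filter_mset_mono) auto

lemma parts_gt_antimono: "s \<le> s' \<Longrightarrow> parts_gt s' K \<le> parts_gt s K"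
  unfolding parts_gt_def by (rule size_filter_mset_mono) auto

lemma parts_ge_le_parts_gt: "s < s' \<Longrightarrow> parts_ge s' K \<le> parts_gt s K"
  unfolding parts_ge_def parts_gt_def by (rule size_filter_mset_mono) auto

lemma parts_ge_le_size: "parts_ge s K \<le> size K"
  unfolding parts_ge_def by simp

lemma max_part_ge: "x \<in># K \<Longrightarrow> x \<le> max_part K"
  unfolding max_part_def by auto

lemma max_part_in: "K \<noteq> {#} \<Longrightarrow> max_part K \<in># K"
  unfolding max_part_def by auto

lemma max_part_eqI: "a \<in># K \<Longrightarrow> (\<forall>x\<in>#K. x \<le> a) \<Longrightarrow> max_part K = a"
  by (metis antisym empty_iff max_part_ge max_part_in set_mset_empty)

lemma parts_ge_max_part: "parts_ge (max_part K) K = count K (max_part K)"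
proof -
  have "parts_gt (max_part K) K = 0"
    unfolding parts_gt_def using max_part_ge by (simp add: filter_mset_eq_conv not_less)
  then show ?thesis using parts_ge_eq_parts_gt_plus_count[of "max_part K" K] by simp
qed

lemma mpartitions_nonempty: "K \<in> mpartitions n \<Longrightarrow> 1 \<le> n \<Longrightarrow> K \<noteq> {#}"
  unfolding mpartitions_def by auto

subsection \<open>Partitions as multisets\<close>

lemma length_le_sum_list: "\<forall>x\<in>set xs. 0 < x \<Longrightarrow> length xs \<le> sum_list (xs :: nat list)"
  by (induction xs) auto

lemma finite_partitions: "finite (partitions n)"
proof (rule finite_subset)
  show "partitions n \<subseteq> {xs. set xs \<subseteq> {..n} \<and> length xs \<le> n}"
    unfolding partitions_def using member_le_sum_list length_le_sum_list by fastforce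
qed (intro finite_lists_length_le, simp)

lemma inj_on_mset_partitions: "inj_on mset (partitions n)"
proof (rule inj_onI)
  fix xs ys assume "xs \<in> partitions n" "ys \<in> partitions n" "mset xs = mset ys"
  then have "sorted (rev xs)" "sorted (rev ys)" "mset (rev xs) = mset (rev ys)"
    unfolding partitions_def by (auto simp: sorted_wrt_rev)
  then show "xs = ys" using properties_for_sort by (metis rev_rev_ident)
qed

lemma mset_partitions: "mset ` partitions n = mpartitions n"
proof
  show "mset ` partitions n \<subseteq> mpartitions n"
    unfolding partitions_def mpartitions_def by (auto simp: sum_mset_sum_list)
  show "mpartitions n \<subseteq> mset ` partitions n"
  proof
    fix K assume K: "K \<in> mpartitions n"
    define xs where "xs = rev (sorted_list_of_multiset K)"
    have "sorted_wrt (\<ge>) xs"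
      unfolding xs_def sorted_wrt_rev using sorted_sorted_list_of_multiset[of K] by simp
    then have "xs \<in> partitions n" using K
      unfolding partitions_def mpartitions_def xs_def by (auto simp flip: sum_mset_sum_list)
    moreover have "mset xs = K" unfolding xs_def by simp
    ultimately show "K \<in> mset ` partitions n" by blast
  qed
qed

lemma finite_mpartitions: "finite (mpartitions n)"
  unfolding mset_partitions[symmetric] using finite_partitions by (rule finite_imageI)

lemma card_partitions_eq_card_mpartitions:
  assumes "\<And>xs. xs \<in> partitions n \<Longrightarrow> P xs \<longleftrightarrow> Q (mset xs)"
  shows "card {xs \<in> partitions n. P xs} = card {K \<in> mpartitions n. Q K}"
proof -
  have "mset ` {xs \<in> partitions n. P xs} = {K \<in> mpartitions n. Q K}"
  proof
    show "mset ` {xs \<in> partitions n. P xs} \<subseteq> {K \<in> mpartitions n. Q K}"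
      using assms mset_partitions[of n] by auto
    show "{K \<in> mpartitions n. Q K} \<subseteq> mset ` {xs \<in> partitions n. P xs}"
    proof
      fix K assume "K \<in> {K \<in> mpartitions n. Q K}"
      then have "K \<in> mset ` partitions n" "Q K" using mset_partitions[of n] by auto
      then obtain xs where "xs \<in> partitions n" "mset xs = K" "Q K" by blast
      then show "K \<in> mset ` {xs \<in> partitions n. P xs}" using assms by blast
    qed
  qed
  moreover have "inj_on mset {xs \<in> partitions n. P xs}"
    using inj_on_mset_partitions by (rule inj_on_subset) auto
  ultimately show ?thesis using card_image by fastforce
qed

lemma hd_eq_max_part: "xs \<in> partitions n \<Longrightarrow> xs \<noteq> [] \<Longrightarrow> hd xs = max_part (mset xs)"
  by (cases xs) (auto simp: partitions_def intro!: max_part_eqI[symmetric])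

lemma rank_eq_mrank: "xs \<in> partitions n \<Longrightarrow> rank xs = mrank (mset xs)"
  unfolding rank_def mrank_def using hd_eq_max_part by (auto simp: max_part_def)

lemma crank_eq_mcrank: "xs \<in> partitions n \<Longrightarrow> crank xs = mcrank (mset xs)"
  unfolding crank_def mcrank_def parts_gt_def using hd_eq_max_part
  by (auto simp: count_mset Let_def max_part_def simp flip: mset_filter)

lemma sorted_desc_nth_iff_less_length_filter:
  assumes "sorted_wrt (\<ge>) xs" "\<And>x y. x \<ge> y \<Longrightarrow> P y \<Longrightarrow> P x" "i < length xs"
  shows "P (xs ! i) \<longleftrightarrow> i < length (filter P xs)"
  using assms
proof (induction xs arbitrary: i)
  case (Cons x xs)
  show ?case
  proof (cases "P x")
    case True
    then show ?thesis using Cons by (cases i) auto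
  next
    case False
    then have "filter P (x # xs) = []" using Cons.prems(1,2) by (auto simp: filter_empty_conv)
    moreover have "\<not> P ((x # xs) ! i)" using False Cons.prems
      by (metis nth_mem set_ConsD sorted_wrt.simps(2))
    ultimately show ?thesis by simp
  qed
qed simp

lemma in_rank_set_iff_in_mrank_set:
  assumes xs: "xs \<in> partitions n"
  shows "in_rank_set m xs \<longleftrightarrow> in_mrank_set m (mset xs)"
proof -
  have sorted: "sorted_wrt (\<ge>) xs" and pos: "\<forall>x\<in>set xs. 0 < x"
    using xs unfolding partitions_def by auto
  have gt: "s < xs ! i \<longleftrightarrow> i < parts_gt s (mset xs)" if "i < length xs" for s i
    unfolding parts_gt_def using sorted_desc_nth_iff_less_length_filter[OF sorted _ that]
    by (simp flip: mset_filter)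
  have ge: "s \<le> xs ! i \<longleftrightarrow> i < parts_ge s (mset xs)" if "i < length xs" for s i
    unfolding parts_ge_def using sorted_desc_nth_iff_less_length_filter[OF sorted _ that]
    by (simp flip: mset_filter)
  have size: "parts_gt 0 (mset xs) = length xs" using parts_gt_0[of "mset xs"] pos by simp
  show ?thesis
  proof
    assume "in_rank_set m xs"
    then consider (entry) i where "i < length xs" "m = int i - int (xs ! i)"
      | (tail) "m \<ge> int (length xs)"
      unfolding in_rank_set_def by blast
    then show "in_mrank_set m (mset xs)"
    proof cases
      case entry
      then have "xs ! i \<noteq> 0" using pos by auto
      then show ?thesis unfolding in_mrank_set_def using entry gt[of i "xs ! i"] ge[of i "xs ! i"]
        by (intro exI[of _ "xs ! i"]) simp
    next
      case tail
      then show ?thesis unfolding in_mrank_set_def using size by (intro exI[of _ 0]) simp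
    qed
  next
    assume "in_mrank_set m (mset xs)"
    then obtain s where s: "int (parts_gt s (mset xs)) \<le> int s + m"
      "s = 0 \<or> int s + m < int (parts_ge s (mset xs))"
      unfolding in_mrank_set_def by blast
    show "in_rank_set m xs"
    proof (cases "s = 0")
      case True
      then show ?thesis using s size unfolding in_rank_set_def by simp
    next
      case False
      define i where "i = nat (int s + m)"
      have i: "int i = int s + m" unfolding i_def using s(1) by simp
      have "i < parts_ge s (mset xs)" using s False i by simp
      moreover have "parts_ge s (mset xs) \<le> length xs" using parts_ge_le_size[of s "mset xs"] by simp
      ultimately have "i < length xs" by simp
      moreover have "xs ! i = s"
        using ge[OF \<open>i < length xs\<close>, of s] gt[OF \<open>i < length xs\<close>, of s] s(1) i
          \<open>i < parts_ge s (mset xs)\<close> by linarith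
      ultimately show ?thesis unfolding in_rank_set_def using i by (intro disjI1 exI[of _ i]) simp
    qed
  qed
qed

subsection \<open>Conjugation\<close>

definition conjugate :: "nat multiset \<Rightarrow> nat multiset" where
  "conjugate K = image_mset (\<lambda>j. parts_ge j K) (mset_set {1..max_part K})"

lemma parts_ge_conjugate: "parts_ge k (conjugate K) = card {j \<in> {1..max_part K}. k \<le> parts_ge j K}"
  unfolding conjugate_def parts_ge_def[of k] by (simp add: filter_mset_image_mset)

lemma mem_iff_le_card_if_down_closed:
  assumes "finite S" and pos: "\<And>i. i \<in> S \<Longrightarrow> 1 \<le> i"
    and down: "\<And>i j. j \<in> S \<Longrightarrow> 1 \<le> i \<Longrightarrow> i \<le> j \<Longrightarrow> i \<in> S" and "1 \<le> (j::nat)"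
  shows "j \<in> S \<longleftrightarrow> j \<le> card S"
proof
  assume "j \<in> S"
  then have "{1..j} \<subseteq> S" using down by auto
  from card_mono[OF \<open>finite S\<close> this] show "j \<le> card S" by simp
next
  assume "j \<le> card S"
  show "j \<in> S"
  proof (rule ccontr)
    assume "j \<notin> S"
    have "S \<subseteq> {1..<j}"
    proof
      fix i assume "i \<in> S"
      then have "\<not> j \<le> i" using down[OF _ \<open>1 \<le> j\<close>] \<open>j \<notin> S\<close> by blast
      then show "i \<in> {1..<j}" using pos[OF \<open>i \<in> S\<close>] by simp
    qed
    then have "card S < j" using card_mono[of "{1..<j}" S] \<open>1 \<le> j\<close> by simp
    then show False using \<open>j \<le> card S\<close> by simp
  qed
qed

text \<open>The Ferrers diagram of the conjugate is the transpose.\<close>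
lemma le_parts_ge_conjugate_iff:
  assumes pos: "\<forall>x\<in>#K. 0 < x" and "1 \<le> j" and "1 \<le> k"
  shows "j \<le> parts_ge k (conjugate K) \<longleftrightarrow> k \<le> parts_ge j K"
proof -
  define S where "S = {j \<in> {1..max_part K}. k \<le> parts_ge j K}"
  have mem: "i \<in> S \<longleftrightarrow> k \<le> parts_ge i K" if "1 \<le> i" for i
  proof
    assume "k \<le> parts_ge i K"
    then obtain x where "x \<in># K" "i \<le> x" using \<open>1 \<le> k\<close> parts_ge_pos_iff[of i K] by auto
    then have "i \<le> max_part K" using max_part_ge order_trans by blast
    then show "i \<in> S" using that \<open>k \<le> parts_ge i K\<close> unfolding S_def by auto
  qed (simp add: S_def)
  have "j \<in> S \<longleftrightarrow> j \<le> card S"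
  proof (rule mem_iff_le_card_if_down_closed)
    show "i \<in> S" if "j' \<in> S" "1 \<le> i" "i \<le> j'" for i j'
      using that parts_ge_antimono[of i j' K] mem[of i] mem[of j'] unfolding S_def by auto
  qed (use \<open>1 \<le> j\<close> in \<open>auto simp: S_def\<close>)
  then show ?thesis using mem[OF \<open>1 \<le> j\<close>] parts_ge_conjugate[of k K] unfolding S_def by simp
qed

lemma size_conjugate: "size (conjugate K) = max_part K"
  unfolding conjugate_def by simp

lemma conjugate_pos: "\<forall>x\<in>#conjugate K. 0 < x"
proof
  fix y assume "y \<in># conjugate K"
  then obtain j where j: "j \<in> {1..max_part K}" "y = parts_ge j K" unfolding conjugate_def by auto
  then have "K \<noteq> {#}" by (auto simp: max_part_def)
  then show "0 < y" using j max_part_in[of K] parts_ge_pos_iff[of j K] by auto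
qed

lemma sum_parts_ge: "\<forall>x\<in>#K. x \<le> a \<Longrightarrow> (\<Sum>j\<in>{1..a}. parts_ge j K) = sum_mset K"
proof (induction K)
  case (add x K)
  have "(\<Sum>j\<in>{1..a}. parts_ge j (add_mset x K))
      = (\<Sum>j\<in>{1..a}. parts_ge j K) + card ({1..a} \<inter> {j. j \<le> x})"
    by (simp add: sum.distrib sum.If_cases)
  also have "{1..a} \<inter> {j. j \<le> x} = {1..x}" using add.prems by auto
  finally show ?case using add by simp
qed simp

lemma sum_mset_conjugate: "sum_mset (conjugate K) = sum_mset K"
  unfolding conjugate_def using sum_parts_ge[of K "max_part K"]
  by (simp add: sum_unfold_sum_mset[symmetric] max_part_ge)

lemma max_part_conjugate: "\<forall>x\<in>#K. 0 < x \<Longrightarrow> max_part (conjugate K) = size K"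
proof (cases "K = {#}")
  case True
  then show ?thesis by (simp add: conjugate_def max_part_def)
next
  case False
  assume pos: "\<forall>x\<in>#K. 0 < x"
  then have "1 \<le> max_part K" using max_part_in[OF False] by (metis One_nat_def Suc_leI)
  show ?thesis
  proof (rule max_part_eqI)
    show "size K \<in># conjugate K" unfolding conjugate_def using \<open>1 \<le> max_part K\<close> parts_ge_1[OF pos]
      by (auto intro!: image_eqI[where x=1])
    show "\<forall>x\<in>#conjugate K. x \<le> size K" unfolding conjugate_def by (auto simp: parts_ge_le_size)
  qed
qed

lemma multiset_eq_if_parts_ge_eq:
  assumes "\<forall>x\<in>#A. 0 < x" "\<forall>x\<in>#B. 0 < x" "\<And>j. 1 \<le> j \<Longrightarrow> parts_ge j A = parts_ge j B"
  shows "A = B"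
proof (rule multiset_eqI)
  fix x
  show "count A x = count B x"
  proof (cases "x = 0")
    case True
    then show ?thesis using assms(1,2) by (metis count_eq_zero_iff less_irrefl)
  next
    case False
    then have "parts_ge x A = parts_ge x B" "parts_ge (Suc x) A = parts_ge (Suc x) B"
      using assms(3) by auto
    then show ?thesis
      using parts_ge_eq_parts_gt_plus_count[of x A] parts_ge_eq_parts_gt_plus_count[of x B]
        parts_ge_Suc[of x A] parts_ge_Suc[of x B] by simp
  qed
qed

lemma conjugate_conjugate: "\<forall>x\<in>#K. 0 < x \<Longrightarrow> conjugate (conjugate K) = K"
proof (rule multiset_eq_if_parts_ge_eq[OF conjugate_pos])
  fix j :: nat assume pos: "\<forall>x\<in>#K. 0 < x" and j: "1 \<le> j"
  have "parts_ge j (conjugate (conjugate K)) = card {i \<in> {1..size K}. j \<le> parts_ge i (conjugate K)}"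
    using parts_ge_conjugate[of j "conjugate K"] max_part_conjugate[OF pos] by simp
  also have "{i \<in> {1..size K}. j \<le> parts_ge i (conjugate K)} = {1..parts_ge j K}"
    using le_parts_ge_conjugate_iff[OF pos j] parts_ge_le_size[of j K] by auto
  finally show "parts_ge j (conjugate (conjugate K)) = parts_ge j K" by simp
qed

lemma conjugate_mpartitions: "K \<in> mpartitions n \<Longrightarrow> conjugate K \<in> mpartitions n"
  unfolding mpartitions_def using conjugate_pos sum_mset_conjugate by auto

lemma card_mpartitions_conjugate:
  "card {K \<in> mpartitions n. P (conjugate K)} = card {K \<in> mpartitions n. P K}"
proof (rule bij_betw_same_card[of conjugate])
  show "bij_betw conjugate {K \<in> mpartitions n. P (conjugate K)} {K \<in> mpartitions n. P K}"
  proof (rule bij_betw_byWitness[where f'=conjugate])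
    have "conjugate (conjugate K) = K" if "K \<in> mpartitions n" for K
      using that conjugate_conjugate unfolding mpartitions_def by blast
    then show "\<forall>K\<in>{K \<in> mpartitions n. P (conjugate K)}. conjugate (conjugate K) = K"
      "\<forall>K\<in>{K \<in> mpartitions n. P K}. conjugate (conjugate K) = K"
      "conjugate ` {K \<in> mpartitions n. P (conjugate K)} \<subseteq> {K \<in> mpartitions n. P K}"
      "conjugate ` {K \<in> mpartitions n. P K} \<subseteq> {K \<in> mpartitions n. P (conjugate K)}"
      using conjugate_mpartitions by auto
  qed
qed

lemma mrank_conjugate: "\<forall>x\<in>#K. 0 < x \<Longrightarrow> mrank (conjugate K) = - mrank K"
  unfolding mrank_def by (simp add: max_part_conjugate size_conjugate)

lemma count_1_conjugate_eq_0_iff: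
  assumes pos: "\<forall>x\<in>#K. 0 < x" and "K \<noteq> {#}"
  shows "count (conjugate K) 1 = 0 \<longleftrightarrow> 2 \<le> count K (max_part K)"
proof -
  have max: "max_part K \<in># K" using \<open>K \<noteq> {#}\<close> by (rule max_part_in)
  then have "1 \<le> max_part K" using pos by (metis One_nat_def Suc_leI)
  have "count (conjugate K) 1 = 0 \<longleftrightarrow> (\<forall>j\<in>{1..max_part K}. parts_ge j K \<noteq> 1)"
    unfolding conjugate_def by (force simp: count_eq_zero_iff)
  also have "\<dots> \<longleftrightarrow> 2 \<le> count K (max_part K)"
  proof
    assume "\<forall>j\<in>{1..max_part K}. parts_ge j K \<noteq> 1"
    then have "count K (max_part K) \<noteq> 1"
      using \<open>1 \<le> max_part K\<close> parts_ge_max_part[of K] by auto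
    moreover have "0 < count K (max_part K)" using max by simp
    ultimately show "2 \<le> count K (max_part K)" by linarith
  next
    assume "2 \<le> count K (max_part K)"
    show "\<forall>j\<in>{1..max_part K}. parts_ge j K \<noteq> 1"
    proof
      fix j assume "j \<in> {1..max_part K}"
      then have "parts_ge (max_part K) K \<le> parts_ge j K" by (intro parts_ge_antimono) simp
      then show "parts_ge j K \<noteq> 1" using \<open>2 \<le> count K (max_part K)\<close> parts_ge_max_part[of K] by simp
    qed
  qed
  finally show ?thesis .
qed

subsection \<open>Dyson's bijection\<close>

definition rank_set_witness :: "int \<Rightarrow> nat multiset \<Rightarrow> nat \<Rightarrow> bool" where
  "rank_set_witness m K s \<longleftrightarrow>
     1 \<le> s \<and> int (parts_gt s K) \<le> int s + m \<and> int s + m < int (parts_ge s K)"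

text \<open>The image of a \<open>rank_set_witness\<close> under \<open>split_part\<close>: breaking the part \<open>s\<close> into ones
  lowers \<open>parts_ge s\<close> by one, except when \<open>s = 1\<close>.\<close>
definition merge_witness :: "int \<Rightarrow> nat multiset \<Rightarrow> nat \<Rightarrow> bool" where
  "merge_witness m K s \<longleftrightarrow> 1 \<le> s \<and> s \<le> count K 1 \<and> int (parts_gt s K) \<le> int s + m \<and>
     (if s = 1 then int s + m < int (parts_ge s K) else int s + m \<le> int (parts_ge s K))"

definition split_part :: "nat \<Rightarrow> nat multiset \<Rightarrow> nat multiset" where
  "split_part s K = K - {#s#} + replicate_mset s 1"

definition merge_ones :: "nat \<Rightarrow> nat multiset \<Rightarrow> nat multiset" where
  "merge_ones s K = K - replicate_mset s 1 + {#s#}"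

lemma rank_set_witness_unique: "rank_set_witness m K s \<Longrightarrow> rank_set_witness m K s' \<Longrightarrow> s = s'"
proof (rule ccontr)
  have *: False if "rank_set_witness m K a" "rank_set_witness m K b" "a < b" for a b
    using that parts_ge_le_parts_gt[of a b K] unfolding rank_set_witness_def by linarith
  assume "rank_set_witness m K s" "rank_set_witness m K s'" "s \<noteq> s'"
  then show False using *[of s s'] *[of s' s] by linarith
qed

lemma merge_witness_unique: "merge_witness m K s \<Longrightarrow> merge_witness m K s' \<Longrightarrow> s = s'"
proof (rule ccontr)
  have *: False if "merge_witness m K a" "merge_witness m K b" "a < b" for a b
  proof -
    have "b \<noteq> 1" using that unfolding merge_witness_def by auto
    then show False using that parts_ge_le_parts_gt[of a b K] unfolding merge_witness_def
      by (auto split: if_splits)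
  qed
  assume "merge_witness m K s" "merge_witness m K s'" "s \<noteq> s'"
  then show False using *[of s s'] *[of s' s] by linarith
qed

lemma mcrank_eq: "count K 1 \<noteq> 0 \<Longrightarrow> mcrank K = int (parts_gt (count K 1) K) - int (count K 1)"
  unfolding mcrank_def Let_def by (rule if_not_P)

lemma split_part_spec:
  assumes K: "K \<in> mpartitions n" and P: "rank_set_witness m K s"
  defines "Z \<equiv> split_part s K"
  shows "Z \<in> mpartitions n" "1 \<le> count Z 1" "m + 2 \<le> int (size Z)" "mcrank Z \<le> m"
    "merge_witness m Z s" "merge_ones s Z = K"
proof -
  have s1: "1 \<le> s" using P unfolding rank_set_witness_def by auto
  have "parts_gt s K < parts_ge s K" using P unfolding rank_set_witness_def by linarith
  then have sK: "s \<in># K" using parts_ge_eq_parts_gt_plus_count[of s K] by auto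
  have pos: "\<forall>x\<in>#K. 0 < x" and sum: "sum_mset K = n" using K unfolding mpartitions_def by auto
  have "sum_mset Z = n"
    unfolding Z_def split_part_def using sum sum_mset.remove[OF sK] by simp
  moreover have "\<forall>x\<in>#Z. 0 < x"
    unfolding Z_def split_part_def using pos by (auto dest: in_diffD)
  ultimately show "Z \<in> mpartitions n" unfolding mpartitions_def by simp
  have count_1: "count Z 1 = count K 1 - (if s = 1 then 1 else 0) + s"
    unfolding Z_def split_part_def by auto
  then show "1 \<le> count Z 1" using s1 by auto
  have "size K = Suc (size (K - {#s#}))" using sK by (metis insert_DiffM size_add_mset)
  then have "size Z = size K - 1 + s" unfolding Z_def split_part_def by simp
  then show "m + 2 \<le> int (size Z)"
    using P parts_ge_le_size[of s K] s1 unfolding rank_set_witness_def by linarith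
  have gt: "parts_gt s Z = parts_gt s K"
    unfolding Z_def split_part_def using s1 parts_gt_remove[OF sK, of s] by simp
  have ge: "parts_ge s Z = parts_ge s K - 1" if "2 \<le> s"
    unfolding Z_def split_part_def using that parts_ge_remove[OF sK, of s] by simp
  have "Z = K" if "s = 1" unfolding Z_def split_part_def using sK that by simp
  then show "merge_witness m Z s"
    using P count_1 gt ge s1 unfolding merge_witness_def rank_set_witness_def
    by (auto simp: of_nat_diff)
  have "count Z 1 \<ge> s" using count_1 by auto
  then have "parts_gt (count Z 1) Z \<le> parts_gt s Z" by (rule parts_gt_antimono)
  moreover have "mcrank Z = int (parts_gt (count Z 1) Z) - int (count Z 1)"
    using \<open>count Z 1 \<ge> s\<close> s1 by (intro mcrank_eq) simp
  ultimately show "mcrank Z \<le> m"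
    using P gt \<open>count Z 1 \<ge> s\<close> unfolding rank_set_witness_def by linarith
  show "merge_ones s Z = K" unfolding Z_def split_part_def merge_ones_def using sK by simp
qed

text \<open>The merge point is the largest \<open>s\<close> with enough parts \<open>\<ge> s\<close>; the crank bound
  forces it to be at most the number of ones.\<close>
lemma merge_witness_exists:
  assumes pos: "\<forall>x\<in>#K. 0 < x" and "1 \<le> count K 1" and "m + 2 \<le> int (size K)"
    and "mcrank K \<le> m"
  shows "\<exists>s. merge_witness m K s"
proof -
  define T where "T = {s. 1 \<le> s \<and>
    (if s = 1 then int s + m < int (parts_ge s K) else int s + m \<le> int (parts_ge s K))}"
  have "T \<subseteq> {..size K + nat (-m)}"
  proof
    fix s assume "s \<in> T"
    then have "int s + m \<le> int (parts_ge s K)" unfolding T_def by (auto split: if_splits)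
    then show "s \<in> {..size K + nat (-m)}" using parts_ge_le_size[of s K] by simp
  qed
  then have "finite T" by (rule finite_subset) simp
  moreover have "1 \<in> T" unfolding T_def using assms(3) parts_ge_1[OF pos] by simp
  moreover define s where "s = Max T"
  ultimately have "s \<in> T" by (auto intro: Max_in)
  have "Suc s \<notin> T" using Max_ge[OF \<open>finite T\<close>, of "Suc s"] unfolding s_def by auto
  have "1 \<le> s" and s_ge:
    "if s = 1 then int s + m < int (parts_ge s K) else int s + m \<le> int (parts_ge s K)"
    using \<open>s \<in> T\<close> unfolding T_def by blast+
  have "int (parts_gt s K) \<le> int s + m"
    using \<open>Suc s \<notin> T\<close> \<open>1 \<le> s\<close> parts_ge_Suc[of s K] unfolding T_def by auto
  moreover have "s \<le> count K 1"
  proof (rule ccontr)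
    define w where "w = count K 1"
    assume "\<not> s \<le> count K 1"
    then have "Suc w \<le> s" "s \<noteq> 1" using assms(2) unfolding w_def by auto
    then have "int s + m \<le> int (parts_ge (Suc w) K)"
      using s_ge parts_ge_antimono[of "Suc w" s K] by auto
    moreover have "int (parts_gt w K) \<le> int w + m"
      using assms(2,4) mcrank_eq[of K] unfolding w_def by simp
    ultimately show False using parts_ge_Suc[of w K] \<open>Suc w \<le> s\<close> by linarith
  qed
  ultimately have "merge_witness m K s" using s_ge \<open>1 \<le> s\<close> unfolding merge_witness_def by auto
  then show ?thesis by blast
qed

lemma merge_ones_spec:
  assumes K: "K \<in> mpartitions n" and Q: "merge_witness m K s"
  defines "Z \<equiv> merge_ones s K"
  shows "Z \<in> mpartitions n" "rank_set_witness m Z s" "split_part s Z = K"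
proof -
  have s1: "1 \<le> s" and "s \<le> count K 1" using Q unfolding merge_witness_def by auto
  then have "replicate_mset s 1 \<subseteq># K" by (auto simp: subseteq_mset_def count_replicate_mset)
  then obtain L where KL: "K = L + replicate_mset s 1" by (metis subset_mset.add_diff_inverse add.commute)
  have ZL: "Z = add_mset s L" unfolding Z_def merge_ones_def KL by simp
  have pos: "\<forall>x\<in>#K. 0 < x" and sum: "sum_mset K = n" using K unfolding mpartitions_def by auto
  then show "Z \<in> mpartitions n" using s1 unfolding mpartitions_def ZL KL by auto
  have gt: "parts_gt s Z = parts_gt s K" unfolding ZL KL using s1 by simp
  have ge: "int s + m < int (parts_ge s Z)"
  proof (cases "s = 1")
    case True
    then have "Z = K" unfolding ZL KL by simp
    then show ?thesis using Q True unfolding merge_witness_def by simp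
  next
    case False
    then have "parts_ge s Z = parts_ge s K + 1" unfolding ZL KL using s1 by simp
    then show ?thesis using Q False unfolding merge_witness_def by simp
  qed
  show "rank_set_witness m Z s" unfolding rank_set_witness_def using gt ge s1 Q
    unfolding merge_witness_def by simp
  show "split_part s Z = K" unfolding split_part_def ZL KL by simp
qed

lemma card_rank_set_witness:
  "card {K \<in> mpartitions n. \<exists>s. rank_set_witness m K s} =
   card {K \<in> mpartitions n. 1 \<le> count K 1 \<and> m + 2 \<le> int (size K) \<and> mcrank K \<le> m}"
proof (rule bij_betw_same_card)
  define f where "f K = split_part (THE s. rank_set_witness m K s) K" for K
  define g where "g K = merge_ones (THE s. merge_witness m K s) K" for K
  show "bij_betw f {K \<in> mpartitions n. \<exists>s. rank_set_witness m K s}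
    {K \<in> mpartitions n. 1 \<le> count K 1 \<and> m + 2 \<le> int (size K) \<and> mcrank K \<le> m}"
  proof (rule bij_betw_byWitness[where f'=g]; intro ballI subsetI; elim imageE CollectE conjE exE)
    fix K s assume K: "K \<in> mpartitions n" and P: "rank_set_witness m K s"
    have "(THE s. rank_set_witness m K s) = s" using P rank_set_witness_unique by blast
    then have "f K = split_part s K" unfolding f_def by simp
    moreover have "(THE s'. merge_witness m (split_part s K) s') = s"
      using split_part_spec(5)[OF K P] merge_witness_unique by blast
    ultimately show "g (f K) = K" unfolding g_def using split_part_spec(6)[OF K P] by simp
    fix L assume "L = f K"
    then show "L \<in> {K \<in> mpartitions n. 1 \<le> count K 1 \<and> m + 2 \<le> int (size K) \<and> mcrank K \<le> m}"
      using split_part_spec(1-4)[OF K P] \<open>f K = split_part s K\<close> by simp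
  next
    fix K assume K: "K \<in> mpartitions n" "1 \<le> count K 1" "m + 2 \<le> int (size K)" "mcrank K \<le> m"
    obtain s where Q: "merge_witness m K s"
      using K merge_witness_exists[of K m] unfolding mpartitions_def by auto
    then have "(THE s. merge_witness m K s) = s" using merge_witness_unique by blast
    then have "g K = merge_ones s K" unfolding g_def by simp
    moreover have "(THE s'. rank_set_witness m (merge_ones s K) s') = s"
      using merge_ones_spec(2)[OF K(1) Q] rank_set_witness_unique by blast
    ultimately show "f (g K) = K" unfolding f_def using merge_ones_spec(3)[OF K(1) Q] by simp
    fix L assume "L = g K"
    then show "L \<in> {K \<in> mpartitions n. \<exists>s. rank_set_witness m K s}"
      using merge_ones_spec(1,2)[OF K(1) Q] \<open>g K = merge_ones s K\<close> by auto
  qed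
qed

definition detach_one :: "nat multiset \<Rightarrow> nat multiset" where
  "detach_one K = add_mset 1 (add_mset (max_part K - 1) (K - {#max_part K#}))"

definition attach_one :: "nat multiset \<Rightarrow> nat multiset" where
  "attach_one K = (let L = K - {#1#} in add_mset (max_part L + 1) (L - {#max_part L#}))"

lemma detach_one_spec:
  assumes K: "K \<in> mpartitions n" and "2 \<le> n" and unique: "count K (max_part K) = 1"
  shows "detach_one K \<in> mpartitions n" "1 \<le> count (detach_one K) 1"
    "size (detach_one K) = size K + 1" "attach_one (detach_one K) = K"
proof -
  have pos: "\<forall>x\<in>#K. 0 < x" and sum: "sum_mset K = n" using K unfolding mpartitions_def by auto
  define a where "a = max_part K"
  define L where "L = K - {#a#}"
  have "K \<noteq> {#}" using mpartitions_nonempty[OF K] \<open>2 \<le> n\<close> by simp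
  then have "a \<in># K" unfolding a_def by (rule max_part_in)
  then have KL: "K = add_mset a L" unfolding L_def by simp
  have less: "x < a" if "x \<in># L" for x
  proof -
    have "x \<in># K" using that KL by simp
    then have "x \<le> a" unfolding a_def by (rule max_part_ge)
    moreover have "count K a = 1" using unique unfolding a_def .
    then have "a \<notin># L" using KL by (simp add: not_in_iff)
    ultimately show ?thesis using that by (auto simp: order.order_iff_strict)
  qed
  have "2 \<le> a"
  proof (rule ccontr)
    assume "\<not> 2 \<le> a"
    then have "\<not> x \<in># L" for x using less[of x] pos KL by fastforce
    then have "L = {#}" using multiset_nonemptyE by blast
    then show False using sum KL \<open>\<not> 2 \<le> a\<close> \<open>2 \<le> n\<close> by simp
  qed
  have DL: "detach_one K = add_mset 1 (add_mset (a - 1) L)"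
    unfolding detach_one_def a_def[symmetric] L_def by simp
  show "detach_one K \<in> mpartitions n"
    using pos sum \<open>2 \<le> a\<close> KL unfolding mpartitions_def DL by auto
  show "1 \<le> count (detach_one K) 1" unfolding DL by simp
  show "size (detach_one K) = size K + 1" unfolding DL using KL by simp
  have "max_part (add_mset (a - 1) L) = a - 1" using less by (intro max_part_eqI) force+
  then show "attach_one (detach_one K) = K"
    unfolding attach_one_def DL using KL \<open>2 \<le> a\<close> by simp
qed

lemma attach_one_spec:
  assumes K: "K \<in> mpartitions n" and "2 \<le> n" and "1 \<le> count K 1"
  shows "attach_one K \<in> mpartitions n" "size (attach_one K) + 1 = size K"
    "count (attach_one K) (max_part (attach_one K)) = 1" "detach_one (attach_one K) = K"
proof -
  have pos: "\<forall>x\<in>#K. 0 < x" and sum: "sum_mset K = n" using K unfolding mpartitions_def by auto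
  define L where "L = K - {#1#}"
  have KL: "K = add_mset 1 L" unfolding L_def using \<open>1 \<le> count K 1\<close> by simp
  have "L \<noteq> {#}" using sum KL \<open>2 \<le> n\<close> by auto
  define b where "b = max_part L"
  have "b \<in># L" unfolding b_def using \<open>L \<noteq> {#}\<close> by (rule max_part_in)
  then obtain L' where LL': "L = add_mset b L'" by (metis insert_DiffM)
  have le: "x \<le> b" if "x \<in># L'" for x
  proof -
    have "x \<in># L" using that LL' by simp
    then show ?thesis unfolding b_def by (rule max_part_ge)
  qed
  have "attach_one K = add_mset (b + 1) (L - {#b#})"
    unfolding attach_one_def Let_def L_def[symmetric] b_def[symmetric] ..
  also have "L - {#b#} = L'" using LL' by simp
  finally have AL: "attach_one K = add_mset (b + 1) L'" .
  show "attach_one K \<in> mpartitions n"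
    using pos sum KL LL' unfolding mpartitions_def AL by auto
  show "size (attach_one K) + 1 = size K" unfolding AL using KL LL' by simp
  have max: "max_part (attach_one K) = b + 1" unfolding AL using le by (intro max_part_eqI) force+
  moreover have "b + 1 \<notin># L'" using le by force
  ultimately show "count (attach_one K) (max_part (attach_one K)) = 1"
    unfolding AL by (simp add: not_in_iff)
  show "detach_one (attach_one K) = K" unfolding detach_one_def max unfolding AL using KL LL' by simp
qed

lemma card_unique_max_part:
  assumes "2 \<le> n"
  shows "card {K \<in> mpartitions n. int (size K) \<le> m \<and> count K (max_part K) = 1} =
    card {K \<in> mpartitions n. 1 \<le> count K 1 \<and> int (size K) \<le> m + 1}"
proof (rule bij_betw_same_card[of detach_one])
  show "bij_betw detach_one
    {K \<in> mpartitions n. int (size K) \<le> m \<and> count K (max_part K) = 1}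
    {K \<in> mpartitions n. 1 \<le> count K 1 \<and> int (size K) \<le> m + 1}"
    by (rule bij_betw_byWitness[where f'=attach_one])
       (use detach_one_spec[OF _ assms] attach_one_spec[OF _ assms] in \<open>fastforce+\<close>)
qed

lemma card_repeated_max_part:
  assumes "2 \<le> n"
  shows "card {K \<in> mpartitions n. int (size K) \<le> m \<and> 2 \<le> count K (max_part K)} =
    card {K \<in> mpartitions n. count K 1 = 0 \<and> int (max_part K) \<le> m}"
proof -
  have "count (conjugate K) 1 = 0 \<longleftrightarrow> 2 \<le> count K (max_part K)" if "K \<in> mpartitions n" for K
    using that mpartitions_nonempty[OF that] assms count_1_conjugate_eq_0_iff
    unfolding mpartitions_def by auto
  moreover have "max_part (conjugate K) = size K" if "K \<in> mpartitions n" for K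
    using that max_part_conjugate unfolding mpartitions_def by auto
  ultimately have "{K \<in> mpartitions n. int (size K) \<le> m \<and> 2 \<le> count K (max_part K)} =
      {K \<in> mpartitions n. count (conjugate K) 1 = 0 \<and> int (max_part (conjugate K)) \<le> m}"
    by auto
  then show ?thesis using card_mpartitions_conjugate by simp
qed

lemma card_Un3_disjoint:
  assumes "finite A" "finite B" "finite C" "A \<inter> B = {}" "A \<inter> C = {}" "B \<inter> C = {}"
  shows "card (A \<union> B \<union> C) = card A + card B + card C"
  using assms by (simp add: card_Un_disjoint Int_Un_distrib2)

lemma in_mrank_set_iff:
  assumes "\<forall>x\<in>#K. 0 < x"
  shows "in_mrank_set m K \<longleftrightarrow> (\<exists>s. rank_set_witness m K s) \<or> int (size K) \<le> m"
proof -
  have "(\<exists>s. int (parts_gt s K) \<le> int s + m \<and> (s = 0 \<or> int s + m < int (parts_ge s K))) \<longleftrightarrow>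
      int (parts_gt 0 K) \<le> m \<or> (\<exists>s\<ge>1. int (parts_gt s K) \<le> int s + m \<and> int s + m < int (parts_ge s K))"
    by (metis of_nat_0 add_0 not_one_le_zero neq0_conv Suc_leI One_nat_def)
  then show ?thesis
    unfolding in_mrank_set_def rank_set_witness_def using parts_gt_0[OF assms] by auto
qed

lemma mcrank_le_if_few_parts:
  assumes "\<forall>x\<in>#K. 0 < x" and "1 \<le> count K 1" and "int (size K) \<le> m + 1"
  shows "mcrank K \<le> m"
proof -
  have "mcrank K = int (parts_gt (count K 1) K) - int (count K 1)"
    using assms(2) by (intro mcrank_eq) simp
  moreover have "parts_gt (count K 1) K \<le> parts_gt 1 K" using assms(2) by (rule parts_gt_antimono)
  ultimately show ?thesis using parts_gt_1_plus_count_1[OF assms(1)] assms(2,3) by linarith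
qed

lemma mpartitions_in_mrank_set_eq_Un:
  assumes "2 \<le> n"
  shows "{K \<in> mpartitions n. in_mrank_set m K} =
    {K \<in> mpartitions n. \<exists>s. rank_set_witness m K s} \<union>
    {K \<in> mpartitions n. int (size K) \<le> m \<and> count K (max_part K) = 1} \<union>
    {K \<in> mpartitions n. int (size K) \<le> m \<and> 2 \<le> count K (max_part K)}"
proof -
  have "in_mrank_set m K \<longleftrightarrow> (\<exists>s. rank_set_witness m K s) \<or>
      int (size K) \<le> m \<and> count K (max_part K) = 1 \<or>
      int (size K) \<le> m \<and> 2 \<le> count K (max_part K)" if K: "K \<in> mpartitions n" for K
  proof -
    have "0 < count K (max_part K)"
      using max_part_in[OF mpartitions_nonempty[OF K]] assms by simp
    then have "count K (max_part K) = 1 \<or> 2 \<le> count K (max_part K)" by linarith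
    moreover have "\<forall>x\<in>#K. 0 < x" using K unfolding mpartitions_def by simp
    ultimately show ?thesis using in_mrank_set_iff by blast
  qed
  then show ?thesis by blast
qed

lemma mpartitions_mcrank_le_eq_Un:
  "{K \<in> mpartitions n. mcrank K \<le> m} =
    {K \<in> mpartitions n. 1 \<le> count K 1 \<and> m + 2 \<le> int (size K) \<and> mcrank K \<le> m} \<union>
    {K \<in> mpartitions n. 1 \<le> count K 1 \<and> int (size K) \<le> m + 1} \<union>
    {K \<in> mpartitions n. count K 1 = 0 \<and> int (max_part K) \<le> m}"
proof -
  have "mcrank K \<le> m \<longleftrightarrow>
      1 \<le> count K 1 \<and> m + 2 \<le> int (size K) \<and> mcrank K \<le> m \<or>
      1 \<le> count K 1 \<and> int (size K) \<le> m + 1 \<or> count K 1 = 0 \<and> int (max_part K) \<le> m"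
    if "K \<in> mpartitions n" for K
    using that mcrank_le_if_few_parts[of K] unfolding mpartitions_def
    by (cases "count K 1 = 0") (auto simp: mcrank_def)
  then show ?thesis by blast
qed

text \<open>Dyson's bijection, in three pieces: a part \<open>s\<close> at position \<open>s + m\<close> is broken into
  \<open>s\<close> ones; a partition with at most \<open>m\<close> parts and a unique largest part has a one
  detached from that part; one with at most \<open>m\<close> parts and a repeated largest part is
  conjugated.\<close>
theorem card_in_mrank_set_eq_card_mcrank_le:
  assumes "2 \<le> n"
  shows "card {K \<in> mpartitions n. in_mrank_set m K} = card {K \<in> mpartitions n. mcrank K \<le> m}"
proof -
  have "\<not> rank_set_witness m K s" if "int (size K) \<le> m" for K s
    using that parts_ge_le_size[of s K] unfolding rank_set_witness_def by linarith
  then have "card {K \<in> mpartitions n. in_mrank_set m K} =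
      card {K \<in> mpartitions n. \<exists>s. rank_set_witness m K s} +
      card {K \<in> mpartitions n. int (size K) \<le> m \<and> count K (max_part K) = 1} +
      card {K \<in> mpartitions n. int (size K) \<le> m \<and> 2 \<le> count K (max_part K)}"
    unfolding mpartitions_in_mrank_set_eq_Un[OF assms]
    by (subst card_Un3_disjoint) (auto simp: finite_mpartitions)
  also have "\<dots> = card {K \<in> mpartitions n. 1 \<le> count K 1 \<and> m + 2 \<le> int (size K) \<and> mcrank K \<le> m} +
      card {K \<in> mpartitions n. 1 \<le> count K 1 \<and> int (size K) \<le> m + 1} +
      card {K \<in> mpartitions n. count K 1 = 0 \<and> int (max_part K) \<le> m}"
    using card_rank_set_witness card_unique_max_part[OF assms] card_repeated_max_part[OF assms]
    by simp
  also have "\<dots> = card {K \<in> mpartitions n. mcrank K \<le> m}"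
    unfolding mpartitions_mcrank_le_eq_Un
    by (subst card_Un3_disjoint) (auto simp: finite_mpartitions count_eq_zero_iff)
  finally show ?thesis .
qed

subsection \<open>Rank-sets of conjugate partitions\<close>

lemma decreasing_hits_iff_not_skips:
  fixes g :: "nat \<Rightarrow> int"
  assumes dec: "\<And>r. 1 \<le> r \<Longrightarrow> g (Suc r) < g r"
  shows "(\<exists>r\<ge>1. g r = m) \<longleftrightarrow> \<not> (g 1 < m \<or> (\<exists>s\<ge>1. g (Suc s) < m \<and> m < g s))"
proof -
  have drop: "g j \<le> g i - int (j - i)" if "1 \<le> i" "i \<le> j" for i j
    using that(2)
  proof (induction j rule: dec_induct)
    case (step j)
    then show ?case using dec[of j] that(1) by (simp add: Suc_diff_le)
  qed simp
  show ?thesis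
  proof
    assume "\<exists>r\<ge>1. g r = m"
    then obtain r where r: "1 \<le> r" "g r = m" by blast
    have "\<not> (g (Suc s) < m \<and> m < g s)" if "1 \<le> s" for s
      using drop[of "Suc s" r] drop[of r s] r that by (cases "s < r") auto
    then show "\<not> (g 1 < m \<or> (\<exists>s\<ge>1. g (Suc s) < m \<and> m < g s))" using drop[OF _ r(1)] r by auto
  next
    assume skips: "\<not> (g 1 < m \<or> (\<exists>s\<ge>1. g (Suc s) < m \<and> m < g s))"
    define R where "R = {r. 1 \<le> r \<and> m \<le> g r}"
    have "R \<subseteq> {..nat (g 1 - m) + 1}" using drop[of 1] unfolding R_def by force
    then have "finite R" by (rule finite_subset) simp
    moreover have "1 \<in> R" using skips unfolding R_def by auto
    moreover define r where "r = Max R"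
    ultimately have "r \<in> R" by (auto intro: Max_in)
    have "Suc r \<notin> R" using Max_ge[OF \<open>finite R\<close>, of "Suc r"] unfolding r_def by auto
    then have "g r = m" using \<open>r \<in> R\<close> skips unfolding R_def by force
    then show "\<exists>r\<ge>1. g r = m" using \<open>r \<in> R\<close> unfolding R_def by blast
  qed
qed

lemma in_mrank_set_iff_skips:
  assumes pos: "\<forall>x\<in>#K. 0 < x"
  defines "g \<equiv> \<lambda>r. int (parts_ge r K) - int r"
  shows "in_mrank_set m K \<longleftrightarrow> g 1 < m \<or> (\<exists>s\<ge>1. g (Suc s) < m \<and> m < g s)"
proof
  assume "in_mrank_set m K"
  then obtain s where s: "int (parts_gt s K) \<le> int s + m" "s = 0 \<or> int s + m < int (parts_ge s K)"
    unfolding in_mrank_set_def by blast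
  show "g 1 < m \<or> (\<exists>s\<ge>1. g (Suc s) < m \<and> m < g s)"
  proof (cases "s = 0")
    case True
    then show ?thesis using s parts_gt_0[OF pos] parts_ge_1[OF pos] unfolding g_def by simp
  next
    case False
    then have "1 \<le> s" by simp
    moreover have "g (Suc s) < m \<and> m < g s" using s False parts_ge_Suc[of s K] unfolding g_def by simp
    ultimately show ?thesis by blast
  qed
next
  assume "g 1 < m \<or> (\<exists>s\<ge>1. g (Suc s) < m \<and> m < g s)"
  then show "in_mrank_set m K"
  proof
    assume "g 1 < m"
    then show ?thesis unfolding in_mrank_set_def g_def using parts_gt_0[OF pos] parts_ge_1[OF pos]
      by (intro exI[of _ 0]) simp
  next
    assume "\<exists>s\<ge>1. g (Suc s) < m \<and> m < g s"
    then obtain s where "1 \<le> s" "g (Suc s) < m" "m < g s" by blast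
    then show ?thesis unfolding in_mrank_set_def g_def using parts_ge_Suc[of s K]
      by (intro exI[of _ s]) simp
  qed
qed

lemma in_mrank_set_conjugate_iff_hits:
  assumes pos: "\<forall>x\<in>#K. 0 < x" and "0 \<le> m"
  shows "in_mrank_set (-m-1) (conjugate K) \<longleftrightarrow> (\<exists>r\<ge>1. int (parts_ge r K) - int r = m)"
proof
  assume "in_mrank_set (-m-1) (conjugate K)"
  then obtain s where s: "int (parts_gt s (conjugate K)) \<le> int s + (-m-1)"
    "s = 0 \<or> int s + (-m-1) < int (parts_ge s (conjugate K))"
    unfolding in_mrank_set_def by blast
  have "1 \<le> s" using s \<open>0 \<le> m\<close> by (cases "s = 0") auto
  define r where "r = nat (int s - m)"
  have "1 \<le> r" and r: "int r = int s - m" using s(1) unfolding r_def by auto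
  have "r \<le> parts_ge s (conjugate K)" using s \<open>1 \<le> s\<close> r by auto
  then have "s \<le> parts_ge r K" using le_parts_ge_conjugate_iff[OF pos \<open>1 \<le> r\<close> \<open>1 \<le> s\<close>] by simp
  moreover have "\<not> r \<le> parts_ge (Suc s) (conjugate K)" using s(1) r parts_ge_Suc[of s] by simp
  then have "\<not> Suc s \<le> parts_ge r K" using le_parts_ge_conjugate_iff[OF pos \<open>1 \<le> r\<close>] by simp
  ultimately have "parts_ge r K = s" by simp
  then show "\<exists>r\<ge>1. int (parts_ge r K) - int r = m" using \<open>1 \<le> r\<close> r by (intro exI[of _ r]) simp
next
  assume "\<exists>r\<ge>1. int (parts_ge r K) - int r = m"
  then obtain r where "1 \<le> r" and rm: "int (parts_ge r K) - int r = m" by blast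
  define s where "s = parts_ge r K"
  have "1 \<le> s" using rm \<open>1 \<le> r\<close> \<open>0 \<le> m\<close> unfolding s_def by linarith
  have "r \<le> parts_ge s (conjugate K)" "\<not> r \<le> parts_ge (Suc s) (conjugate K)"
    using le_parts_ge_conjugate_iff[OF pos \<open>1 \<le> r\<close>] \<open>1 \<le> s\<close> unfolding s_def by auto
  then show "in_mrank_set (-m-1) (conjugate K)"
    unfolding in_mrank_set_def using rm s_def parts_ge_Suc[of s "conjugate K"]
    by (intro exI[of _ s]) auto
qed

text \<open>The rank-set of \<open>K\<close> consists of the values skipped by the strictly decreasing sequence
  \<open>r \<mapsto> parts_ge r K - r\<close>, and the reflected rank-set of the conjugate of the values it
  takes.\<close>
lemma in_mrank_set_conjugate_iff:
  assumes "\<forall>x\<in>#K. 0 < x" and "0 \<le> m"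
  shows "in_mrank_set (-m-1) (conjugate K) \<longleftrightarrow> \<not> in_mrank_set m K"
proof -
  have "int (parts_ge (Suc r) K) - int (Suc r) < int (parts_ge r K) - int r" for r
    using parts_ge_antimono[of r "Suc r" K] by simp
  then show ?thesis
    unfolding in_mrank_set_conjugate_iff_hits[OF assms] in_mrank_set_iff_skips[OF assms(1)]
    by (rule decreasing_hits_iff_not_skips)
qed

lemma sum_card_fibers:
  assumes "finite R" and "finite X"
  shows "(\<Sum>r\<in>R. card {x \<in> X. f x = r}) = card {x \<in> X. f x \<in> R}"
proof -
  have "{x \<in> X. f x \<in> R} = (\<Union>r\<in>R. {x \<in> X. f x = r})" by auto
  also have "card \<dots> = (\<Sum>r\<in>R. card {x \<in> X. f x = r})"
    using assms by (intro card_UN_disjoint) auto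
  finally show ?thesis by simp
qed

lemma card_filter_add_card_filter_not:
  "finite X \<Longrightarrow> card {x \<in> X. P x} + card {x \<in> X. \<not> P x} = card X"
  by (subst card_Un_disjoint[symmetric]) (auto intro: arg_cong[where f=card])

lemma card_partitions: "card (partitions n) = card (mpartitions n)"
  using card_partitions_eq_card_mpartitions[of n "\<lambda>_. True" "\<lambda>_. True"] by simp

lemma N_le_eq:
  assumes "0 \<le> m"
  shows "int (N_le m n) = 2 * int (p_rank_ge (-m) n) - int (card (partitions n))"
proof -
  define c where "c P = card {K \<in> mpartitions n. P K}" for P
  have "N_le m n = card {xs \<in> partitions n. rank xs \<in> {-m..m}}"
    unfolding N_le_def N_def using finite_partitions by (simp add: sum_card_fibers)
  also have "\<dots> = c (\<lambda>K. mrank K \<in> {-m..m})"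
    unfolding c_def by (rule card_partitions_eq_card_mpartitions) (simp add: rank_eq_mrank)
  finally have N: "N_le m n = c (\<lambda>K. mrank K \<in> {-m..m})" .
  have p: "p_rank_ge (-m) n = c (\<lambda>K. \<not> mrank K < -m)"
    unfolding p_rank_ge_def c_def
    by (rule card_partitions_eq_card_mpartitions) (auto simp: rank_eq_mrank)
  have "c (\<lambda>K. m < mrank K) = c (\<lambda>K. m < mrank (conjugate K))"
    unfolding c_def by (rule card_mpartitions_conjugate[symmetric])
  also have "\<dots> = c (\<lambda>K. mrank K < -m)"
    unfolding c_def using mrank_conjugate by (auto simp: mpartitions_def intro!: arg_cong[where f=card])
  finally have symm: "c (\<lambda>K. m < mrank K) = c (\<lambda>K. mrank K < -m)" .
  have "card (mpartitions n) = c (\<lambda>K. mrank K \<in> {-m..m}) + c (\<lambda>K. m < mrank K) + c (\<lambda>K. mrank K < -m)"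
    unfolding c_def using assms
    by (subst card_Un3_disjoint[symmetric]) (auto simp: finite_mpartitions intro!: arg_cong[where f=card])
  moreover have "c (\<lambda>K. \<not> mrank K < -m) + c (\<lambda>K. mrank K < -m) = card (mpartitions n)"
    unfolding c_def using card_filter_add_card_filter_not[OF finite_mpartitions] by (simp add: add.commute)
  ultimately show ?thesis using N p symm card_partitions by simp
qed

lemma M_le_eq:
  assumes "0 \<le> m" and "2 \<le> n"
  shows "int (M_le m n) = 2 * int (q m n) - int (card (partitions n))"
proof -
  define c where "c P = card {K \<in> mpartitions n. P K}" for P
  have "M_le m n = card {xs \<in> partitions n. crank xs \<in> {-m..m}}"
    unfolding M_le_def M_def using finite_partitions by (simp add: sum_card_fibers)
  also have "\<dots> = c (\<lambda>K. mcrank K \<in> {-m..m})"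
    unfolding c_def by (rule card_partitions_eq_card_mpartitions) (simp add: crank_eq_mcrank)
  finally have M: "M_le m n = c (\<lambda>K. mcrank K \<in> {-m..m})" .
  have q: "q m n = c (in_mrank_set m)"
    unfolding q_def c_def
    by (rule card_partitions_eq_card_mpartitions) (simp add: in_rank_set_iff_in_mrank_set)
  have "c (\<lambda>K. mcrank K \<le> m) = c (\<lambda>K. mcrank K \<in> {-m..m}) + c (\<lambda>K. mcrank K \<le> -m-1)"
    unfolding c_def using assms(1)
    by (subst card_Un_disjoint[symmetric]) (auto simp: finite_mpartitions intro!: arg_cong[where f=card])
  moreover have "c (\<lambda>K. mcrank K \<le> m) = c (in_mrank_set m)"
    unfolding c_def using card_in_mrank_set_eq_card_mcrank_le[OF assms(2)] by simp
  moreover have "c (\<lambda>K. mcrank K \<le> -m-1) = c (\<lambda>K. \<not> in_mrank_set m K)"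
  proof -
    have "c (\<lambda>K. mcrank K \<le> -m-1) = c (\<lambda>K. in_mrank_set (-m-1) (conjugate K))"
      unfolding c_def using card_in_mrank_set_eq_card_mcrank_le[OF assms(2)]
        card_mpartitions_conjugate by simp
    also have "\<dots> = c (\<lambda>K. \<not> in_mrank_set m K)"
      unfolding c_def using in_mrank_set_conjugate_iff[OF _ assms(1)]
      by (auto simp: mpartitions_def intro!: arg_cong[where f=card])
    finally show ?thesis .
  qed
  moreover have "c (in_mrank_set m) + c (\<lambda>K. \<not> in_mrank_set m K) = card (mpartitions n)"
    unfolding c_def by (rule card_filter_add_card_filter_not[OF finite_mpartitions])
  ultimately show ?thesis using M q card_partitions by simp
qed

theorem theorem1p3:
  fixes m :: int and n :: nat
  assumes "m \<ge> 0" and "n > 1"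
  shows "int (N_le m n) - int (M_le m n) = 2 * (int (p_rank_ge (-m) n) - int (q m n))"
  using N_le_eq[OF assms(1)] M_le_eq[OF assms(1)] assms(2) by simp

end
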